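(* Let $\lambda\in\mathbb{C}$, $\lambda\ne1$, $\alpha\in\mathbb{C}$, $m\in\mathbb{Z}_{\ge0}$, $b,c\in\mathbb{C}\setminus\{0\}$, and let $S_n(x)\sim\left(\left(\frac{e^{(\lambda-1)t}-\lambda}{1-\lambda}\right)^{\alpha},\ \frac{t}{e^{ct}(1+bt)^m}\right)$. Then for $n\ge1$, $$S_n(x)=(-1)^{mn}\sum_{l=0}^{n-1}C_{mn}\!\left(l;-\frac{nc}{b}\right)(nc)^l\binom{n-1}{l}A_{n-l}^{(\alpha)}(x\mid\lambda).$$
   Context: For invertible $g(t)$ (nonzero constant term) and delta series $f(t)$ ($f(0)=0$, nonzero coefficient of $t$), the Sheffer sequence $S_n(x)\sim(g(t),f(t))$ is the unique polynomial sequence with $\sum_{k\ge0}S_k(y)\frac{t^k}{k!}=\frac{1}{g(\bar f(t))}e^{y\bar f(t)}$ for all $y\in\mathbb{C}$, where $\bar f$ is the compositional inverse of $f$. Complex powers of series with constant term $1$ are defined by $h^a=\exp(a\log h)$. For $a\ne0$, the Poisson–Charlier polynomials are $C_N(x;a)=\sum_{k=0}^N\binom{N}{k}(-1)^{N-k}a^{-k}(x)_k$, where $(x)_k=x(x-1)\cdots(x-k+1)$. The Frobenius-type Eulerian polynomials of order $\alpha$ are defined by $\left(\frac{1-\lambda}{e^{(\lambda-1)t}-\lambda}\right)^{\alpha}e^{xt}=\sum_{n\ge0}A_n^{(\alpha)}(x\mid\lambda)\frac{t^n}{n!}$. *)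

theory Defs
  imports Complex_Main "HOL-Computational_Algebra.Formal_Power_Series" "HOL-Computational_Algebra.Polynomial"
begin

text \<open>Complex power of a formal power series h with constant term 1:
  h^a = exp(a log h), where log h = log(1 + (h - 1)) = fps_ln 1 composed with h - 1.\<close>
definition fps_cpow :: "complex fps \<Rightarrow> complex \<Rightarrow> complex fps" where
  "fps_cpow h a = fps_exp a oo (fps_ln 1 oo (h - 1))"

definition sheffer :: "complex fps \<Rightarrow> complex fps \<Rightarrow> (nat \<Rightarrow> complex poly) \<Rightarrow> bool" where
  "sheffer g f S \<longleftrightarrow>
     (\<forall>y. Abs_fps (\<lambda>k. poly (S k) y / fact k)
          = inverse (g oo fps_inv f) * (fps_exp y oo fps_inv f))"

definition ffact_c :: "complex \<Rightarrow> nat \<Rightarrow> complex" where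
  "ffact_c x k = (\<Prod>i<k. x - of_nat i)"

definition poisson_charlier :: "nat \<Rightarrow> complex \<Rightarrow> complex \<Rightarrow> complex" where
  "poisson_charlier N x a =
     (\<Sum>k=0..N. of_nat (N choose k) * (-1) ^ (N - k) * inverse a ^ k * ffact_c x k)"

definition frob_euler :: "nat \<Rightarrow> complex \<Rightarrow> complex \<Rightarrow> complex \<Rightarrow> complex" where
  "frob_euler n alpha x lam =
     fact n * fps_nth (fps_cpow (fps_const (1 - lam) * inverse (fps_exp (lam - 1) - fps_const lam)) alpha
               * fps_exp x) n"

end

theory Submission
  imports Defs
begin

(* Write f = t / phi with phi = e^(ct) (1 + bt)^m and H = e^(xt) / g. Lagrange inversion gives
   n [t^n] H(fbar t) = [t^(n-1)] H'(t) phi(t)^n, so expanding the product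
   S_n(x) = sum_l binom(n-1, l) (l! [t^l] phi^n) ((n-l)! [t^(n-l)] H).
   Since phi^n = e^(nct) (1 + bt)^(mn), the number l! [t^l] phi^n is (-1)^(mn) (nc)^l C_mn(l; -nc/b),
   and since 1/g is the complex power defining the Frobenius-Euler polynomials,
   (n-l)! [t^(n-l)] H = A_(n-l)^(alpha)(x | lambda). *)

unbundle fps_syntax

lemma fps_cutoff_eq_sum: "fps_cutoff n f = (\<Sum>k<n. fps_const (f $ k) * fps_X ^ k)"
  by (rule fps_ext) (simp add: fps_sum_nth fps_X_power_nth sum.delta if_distrib cong: if_cong)

lemma fps_one_plus_const_X_power_nth:
  "((1 + fps_const (b::'a::comm_semiring_1) * fps_X) ^ N) $ i = of_nat (N choose i) * b ^ i"
proof (induction N arbitrary: i)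
  case 0
  then show ?case by (cases i) simp_all
next
  case (Suc N)
  have "(1 + fps_const b * fps_X) ^ Suc N
      = (1 + fps_const b * fps_X) ^ N + fps_X * (fps_const b * (1 + fps_const b * fps_X) ^ N)"
    by (simp add: algebra_simps)
  then have "((1 + fps_const b * fps_X) ^ Suc N) $ i
      = of_nat (N choose i) * b ^ i
        + (if i = 0 then 0 else b * (of_nat (N choose (i - 1)) * b ^ (i - 1)))"
    by (simp add: Suc.IH)
  then show ?case by (cases i) (simp_all add: algebra_simps)
qed

lemma fps_deriv_fps_ln_compose:
  fixes h :: "'a::field_char_0 fps"
  assumes h0: "h $ 0 = 1"
  shows "fps_deriv (fps_ln 1 oo (h - 1)) = inverse h * fps_deriv h"
proof -
  have b0: "(h - 1) $ 0 = 0" using h0 by simp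
  have "(1 + fps_X) oo (h - 1) = h"
    using b0 by (simp add: fps_compose_add_distrib)
  then have inv: "inverse (1 + fps_X) oo (h - 1) = inverse h"
    by (simp add: fps_inverse_compose[OF b0])
  have "fps_deriv (fps_ln 1 oo (h - 1)) = (inverse (1 + fps_X) oo (h - 1)) * fps_deriv h"
    by (simp add: fps_compose_deriv[OF b0] fps_ln_deriv)
  then show ?thesis by (simp only: inv)
qed

lemma fps_deriv_fps_exp_compose:
  fixes B :: "'a::field_char_0 fps"
  assumes "B $ 0 = 0"
  shows "fps_deriv (fps_exp a oo B) = fps_const a * (fps_exp a oo B) * fps_deriv B"
  using fps_compose_deriv[OF assms, of "fps_exp a"] by (simp add: fps_const_mult_apply_left)

lemma fps_deriv_X_div_mult_power_nth:
  fixes phi :: "'a::field_char_0 fps"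
  assumes p0: "phi $ 0 \<noteq> 0"
  shows "(fps_deriv (fps_X * inverse phi) * phi ^ Suc j) $ j = (if j = 0 then 1 else 0)"
proof (cases j)
  case 0
  then show ?thesis using p0 by (simp add: fps_mult_nth)
next
  case (Suc i)
  have inv: "phi * inverse phi = 1" using p0 by (simp add: inverse_mult_eq_1')
  have "fps_deriv (fps_X * inverse phi) * phi ^ Suc j
      = (phi * inverse phi) * phi ^ j - fps_X * (fps_deriv phi * phi ^ i) * (phi * inverse phi)\<^sup>2"
    using p0 by (simp add: Suc fps_inverse_deriv algebra_simps power2_eq_square)
  also have "\<dots> = phi ^ j - fps_X * (fps_deriv phi * phi ^ i)"
    by (simp add: inv)
  finally have eq: "fps_deriv (fps_X * inverse phi) * phi ^ Suc j
      = phi ^ j - fps_X * (fps_deriv phi * phi ^ i)" .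
  \<comment> \<open>the two coefficients agree because \<open>(phi ^ j)' = j * phi' * phi ^ (j - 1)\<close>\<close>
  have "fps_deriv (phi ^ j) = fps_const (of_nat j) * (fps_deriv phi * phi ^ i)"
    by (simp only: fps_deriv_power Suc diff_Suc_1 mult.assoc)
  then have "of_nat j * (fps_deriv phi * phi ^ i) $ i = of_nat j * (phi ^ j) $ j"
    using fps_deriv_nth[of "phi ^ j" i] by (simp add: Suc)
  then have "(fps_deriv phi * phi ^ i) $ i = (phi ^ j) $ j"
    by (simp add: Suc del: of_nat_Suc)
  then show ?thesis using eq by (simp add: Suc)
qed

lemma fps_deriv_X_div_power_mult_nth:
  fixes phi :: "'a::field_char_0 fps"
  assumes p0: "phi $ 0 \<noteq> 0" and "k \<le> n" and "n \<ge> 1"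
  shows "(fps_deriv ((fps_X * inverse phi) ^ k) * phi ^ n) $ (n - 1)
      = (if k = n then of_nat n else 0)"
proof (cases k)
  case 0
  then show ?thesis using assms by simp
next
  case (Suc i)
  have n: "n = i + Suc (n - k)" using assms Suc by simp
  have "inverse phi ^ i * phi ^ n = (inverse phi * phi) ^ i * phi ^ Suc (n - k)"
    by (subst n) (simp only: power_add power_mult_distrib mult_ac)
  also have "\<dots> = phi ^ Suc (n - k)"
    using p0 by (simp add: inverse_mult_eq_1)
  finally have pow: "inverse phi ^ i * phi ^ n = phi ^ Suc (n - k)" .
  have "fps_deriv ((fps_X * inverse phi) ^ k) * phi ^ n
      = fps_const (of_nat k)
        * (fps_X ^ i * (fps_deriv (fps_X * inverse phi) * (inverse phi ^ i * phi ^ n)))"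
    unfolding Suc fps_deriv_power diff_Suc_1 unfolding power_mult_distrib by (simp only: mult_ac)
  then have "(fps_deriv ((fps_X * inverse phi) ^ k) * phi ^ n) $ (n - 1)
      = of_nat k * (fps_deriv (fps_X * inverse phi) * phi ^ Suc (n - k)) $ (n - k)"
    using assms Suc by (simp add: pow fps_X_power_mult_nth)
  then show ?thesis
    using fps_deriv_X_div_mult_power_nth[OF p0, of "n - k"] assms by auto
qed

lemma fps_deriv_compose_X_power_mult_nth:
  fixes phi T :: "'a::field_char_0 fps"
  assumes "phi $ 0 \<noteq> 0" and "n \<ge> 1"
  shows "(fps_deriv ((fps_X ^ Suc n * T) oo (fps_X * inverse phi)) * phi ^ n) $ (n - 1) = 0"
proof -
  define f where "f = fps_X * inverse phi"
  have f0: "f $ 0 = 0" unfolding f_def by simp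
  have "(fps_X ^ Suc n * T) oo f = f ^ Suc n * (T oo f)"
    by (simp only: fps_compose_mult_distrib[OF f0] fps_X_power_compose[OF f0])
  then have "fps_deriv ((fps_X ^ Suc n * T) oo f) * phi ^ n
      = fps_X ^ n * ((inverse phi * phi) ^ n
          * (fps_const (of_nat (Suc n)) * fps_deriv f * (T oo f) + f * fps_deriv (T oo f)))"
    by (simp only: fps_deriv_mult fps_deriv_power f_def power_mult_distrib diff_Suc_1)
      (simp add: algebra_simps)
  then show ?thesis using assms unfolding f_def by (simp add: fps_X_power_mult_nth)
qed

theorem fps_lagrange_inversion:
  fixes phi G :: "'a::field_char_0 fps"
  assumes p0: "phi $ 0 \<noteq> 0" and n: "n \<ge> 1"
  shows "(fps_deriv (G oo (fps_X * inverse phi)) * phi ^ n) $ (n - 1) = of_nat n * G $ n"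
proof -
  define f where "f = fps_X * inverse phi"
  have f0: "f $ 0 = 0" unfolding f_def by simp
  \<comment> \<open>split \<open>G\<close> at degree \<open>n\<close>: the tail contributes nothing,
    and of the powers \<open>f ^ k\<close> only \<open>k = n\<close> does\<close>
  have "G = fps_cutoff (Suc n) G + fps_X ^ Suc n * fps_shift (Suc n) G"
    using fps_shift_cutoff'[of "Suc n" G] by (simp only: add.commute)
  then have "G oo f = (fps_cutoff (Suc n) G oo f) + (fps_X ^ Suc n * fps_shift (Suc n) G oo f)"
    by (metis fps_compose_add_distrib)
  also have "fps_cutoff (Suc n) G oo f = (\<Sum>k<Suc n. fps_const (G $ k) * f ^ k)"
    by (simp only: fps_cutoff_eq_sum fps_compose_sum_distrib fps_const_mult_apply_left[symmetric]
        fps_X_power_compose[OF f0])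
  finally have "(fps_deriv (G oo f) * phi ^ n) $ (n - 1) =
      (\<Sum>k<Suc n. G $ k * (fps_deriv (f ^ k) * phi ^ n) $ (n - 1))"
    using fps_deriv_compose_X_power_mult_nth[OF p0 n]
    by (simp add: f_def fps_deriv_sum distrib_right sum_distrib_right fps_sum_nth mult.assoc)
  also have "\<dots> = (\<Sum>k<Suc n. if k = n then G $ k * of_nat n else 0)"
    by (rule sum.cong) (use fps_deriv_X_div_power_mult_nth[OF p0 _ n] in \<open>auto simp: f_def\<close>)
  finally show ?thesis by (simp add: f_def mult.commute)
qed

lemma inverse_fps_cpow:
  assumes h0: "h $ 0 = 1"
  shows "inverse (fps_cpow h a) = fps_cpow (inverse h) a"
proof (rule fps_inverse_unique)
  have ih0: "inverse h $ 0 = 1" using h0 by simp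
  define L where "L = fps_ln 1 oo (h - 1)"
  define L' where "L' = fps_ln 1 oo (inverse h - 1)"
  define P where "P = (fps_exp a oo L) * (fps_exp a oo L')"
  have L0: "L $ 0 = 0" and L'0: "L' $ 0 = 0" by (simp_all add: L_def L'_def)
  have dL: "fps_deriv L = inverse h * fps_deriv h"
    unfolding L_def by (rule fps_deriv_fps_ln_compose[OF h0])
  have "fps_deriv L' = h * (- fps_deriv h * (inverse h)\<^sup>2)"
    using h0 unfolding L'_def by (simp add: fps_deriv_fps_ln_compose[OF ih0] fps_inverse_deriv)
  also have "\<dots> = - (inverse h * h) * (inverse h * fps_deriv h)"
    by (simp add: power2_eq_square algebra_simps)
  finally have dL': "fps_deriv L' = - fps_deriv L"
    using h0 by (simp add: dL inverse_mult_eq_1)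
  \<comment> \<open>the logarithmic derivatives of \<open>h\<close> and \<open>inverse h\<close> cancel\<close>
  have "fps_deriv P = fps_const a * P * (fps_deriv L + fps_deriv L')"
    unfolding P_def fps_deriv_mult fps_deriv_fps_exp_compose[OF L0] fps_deriv_fps_exp_compose[OF L'0]
    by (simp add: algebra_simps)
  then have "fps_deriv P = 0" by (simp add: dL')
  moreover have "P $ 0 = 1" unfolding P_def by (simp add: L0 L'0)
  ultimately have "P = 1" by simp
  then show "fps_cpow h a * fps_cpow (inverse h) a = 1"
    unfolding P_def L_def L'_def fps_cpow_def .
qed

lemma fact_pred_mult_eq_binomial:
  assumes "l < n"
  shows "(fact (n - 1) :: 'a::{comm_semiring_1,semiring_char_0}) * of_nat (n - l)
      = fact l * of_nat ((n - 1) choose l) * fact (n - l)"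
proof -
  have "fact l * fact (n - 1 - l) * ((n - 1) choose l) = fact (n - 1)"
    using assms by (intro binomial_fact_lemma) arith
  then have binom: "fact l * fact (n - 1 - l) * of_nat ((n - 1) choose l) = (fact (n - 1) :: 'a)"
    by (metis of_nat_fact of_nat_mult)
  have "n - l = Suc (n - 1 - l)" using assms by arith
  then have "fact (n - l) = of_nat (n - l) * (fact (n - 1 - l) :: 'a)"
    by (metis fact_Suc)
  then show ?thesis by (simp only: binom[symmetric] mult_ac)
qed

lemma sheffer_poly_eq_compose:
  assumes "sheffer g f S" and "g $ 0 \<noteq> 0"
  shows "poly (S n) y = fact n * ((inverse g * fps_exp y) oo fps_inv f) $ n"
proof -
  have fi0: "fps_inv f $ 0 = 0" by (simp add: fps_inv_def)
  have "Abs_fps (\<lambda>k. poly (S k) y / fact k) = inverse (g oo fps_inv f) * (fps_exp y oo fps_inv f)"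
    using assms(1) unfolding sheffer_def by blast
  also have "\<dots> = (inverse g * fps_exp y) oo fps_inv f"
    using assms(2) by (simp add: fps_inverse_compose[OF fi0] fps_compose_mult_distrib[OF fi0])
  finally have "poly (S n) y / fact n = ((inverse g * fps_exp y) oo fps_inv f) $ n"
    by (metis fps_nth_Abs_fps)
  then show ?thesis by (simp add: field_simps)
qed

lemma sheffer_poly_eq_lagrange:
  assumes sh: "sheffer g (fps_X * inverse phi) S" and g0: "g $ 0 \<noteq> 0" and p0: "phi $ 0 \<noteq> 0"
    and n: "n \<ge> 1"
  shows "poly (S n) y = (\<Sum>l=0..n-1. of_nat ((n - 1) choose l) * (fact l * (phi ^ n) $ l)
                                   * (fact (n - l) * (inverse g * fps_exp y) $ (n - l)))"
proof -
  define f where "f = fps_X * inverse phi"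
  define H where "H = inverse g * fps_exp y"
  have f0: "f $ 0 = 0" and f1: "f $ 1 \<noteq> 0" using p0 by (simp_all add: f_def)
  have fi0: "fps_inv f $ 0 = 0" by (simp add: fps_inv_def)
  have "(H oo fps_inv f) oo f = H oo (fps_inv f oo f)"
    by (rule fps_compose_assoc[OF f0 fi0, symmetric])
  also have "\<dots> = H" by (simp add: fps_inv[OF f0 f1])
  finally have "(H oo fps_inv f) oo f = H" .
  then have lag: "of_nat n * (H oo fps_inv f) $ n = (phi ^ n * fps_deriv H) $ (n - 1)"
    using fps_lagrange_inversion[OF p0 n, of "H oo fps_inv f"] by (simp add: f_def mult.commute)
  have "poly (S n) y = fact (n - 1) * (of_nat n * (H oo fps_inv f) $ n)"
    using sheffer_poly_eq_compose[OF sh[folded f_def] g0, of n y] n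
    by (simp add: H_def fact_reduce)
  also have "\<dots> = (\<Sum>l=0..n-1. (fact (n - 1) * of_nat (n - l)) * (phi ^ n) $ l * H $ (n - l))"
    unfolding lag fps_mult_nth sum_distrib_left
  proof (intro sum.cong refl)
    fix l assume "l \<in> {0..n-1}"
    then have "n - 1 - l + 1 = n - l" using n by auto
    then show "fact (n - 1) * ((phi ^ n) $ l * fps_deriv H $ (n - 1 - l))
        = (fact (n - 1) * of_nat (n - l)) * (phi ^ n) $ l * H $ (n - l)"
      by (simp only: fps_deriv_nth mult_ac)
  qed
  also have "\<dots> = (\<Sum>l=0..n-1. of_nat ((n - 1) choose l) * (fact l * (phi ^ n) $ l)
                                   * (fact (n - l) * H $ (n - l)))"
  proof (intro sum.cong refl)
    fix l assume "l \<in> {0..n-1}"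
    then have "l < n" using n by auto
    then show "(fact (n - 1) * of_nat (n - l)) * (phi ^ n) $ l * H $ (n - l)
        = of_nat ((n - 1) choose l) * (fact l * (phi ^ n) $ l) * (fact (n - l) * H $ (n - l))"
      by (simp only: fact_pred_mult_eq_binomial mult_ac)
  qed
  finally show ?thesis unfolding H_def .
qed

lemma neg_one_power_diff_mult:
  assumes "k \<le> N"
  shows "(-1::'a::ring_1) ^ N * (-1) ^ (N - k) = (-1) ^ k"
proof -
  have "N + (N - k) = 2 * (N - k) + k" using assms by simp
  then have "(-1::'a) ^ N * (-1) ^ (N - k) = (-1) ^ (2 * (N - k) + k)"
    by (simp only: power_add[symmetric])
  then show ?thesis by (simp add: power_add power_mult)
qed

lemma ffact_c_of_nat: "ffact_c (of_nat l) k = (if k \<le> l then fact l / fact (l - k) else 0)"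
proof (induction k)
  case (Suc k)
  show ?case
  proof (cases "Suc k \<le> l")
    case True
    then have "l - k = Suc (l - Suc k)" by arith
    then have "fact (l - k) = of_nat (l - k) * (fact (l - Suc k) :: complex)"
      by (metis fact_Suc)
    with True Suc.IH show ?thesis by (simp add: ffact_c_def of_nat_diff field_simps)
  next
    case False
    then show ?thesis by (auto simp: ffact_c_def intro!: prod_zero bexI[of _ l])
  qed
qed (simp add: ffact_c_def)

lemma poisson_charlier_of_nat:
  fixes b d :: complex
  assumes "d \<noteq> 0"
  shows "(-1) ^ N * poisson_charlier N (of_nat l) (- d / b) * d ^ l =
         fact l * (\<Sum>k=0..l. of_nat (N choose k) * b ^ k * d ^ (l - k) / fact (l - k))"
proof -
  define T where
    "T k = (if k \<le> l then fact l * (of_nat (N choose k) * b ^ k * d ^ (l - k) / fact (l - k)) else 0)"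
    for k
  have "(-1) ^ N * poisson_charlier N (of_nat l) (- d / b) * d ^ l = (\<Sum>k=0..N. T k)"
    unfolding poisson_charlier_def sum_distrib_left sum_distrib_right
  proof (intro sum.cong refl)
    fix k assume "k \<in> {0..N}"
    then have "(-1) ^ N * (-1) ^ (N - k) * inverse (- d / b) ^ k = (b / d) ^ k"
      by (simp add: neg_one_power_diff_mult power_minus')
    moreover have "k \<le> l \<Longrightarrow> (b / d) ^ k * d ^ l = b ^ k * d ^ (l - k)"
      using assms by (simp add: power_divide power_diff)
    ultimately show "(-1) ^ N * (of_nat (N choose k) * (-1) ^ (N - k) * inverse (- d / b) ^ k
        * ffact_c (of_nat l) k) * d ^ l = T k"
      unfolding T_def ffact_c_of_nat by (simp add: algebra_simps)
  qed
  also have "\<dots> = (\<Sum>k=0..N+l. T k)"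
    by (rule sum.mono_neutral_left) (auto simp: T_def)
  also have "\<dots> = (\<Sum>k=0..l. T k)"
    by (rule sum.mono_neutral_right) (auto simp: T_def)
  also have "\<dots> = fact l * (\<Sum>k=0..l. of_nat (N choose k) * b ^ k * d ^ (l - k) / fact (l - k))"
    unfolding sum_distrib_left by (intro sum.cong) (auto simp: T_def)
  finally show ?thesis .
qed

lemma fps_exp_mult_binomial_power_nth:
  fixes b c :: "'a::field_char_0"
  shows "((fps_exp c * (1 + fps_const b * fps_X) ^ m) ^ n) $ l =
    (\<Sum>k=0..l. of_nat ((m * n) choose k) * b ^ k * (of_nat n * c) ^ (l - k) / fact (l - k))"
proof -
  have "(fps_exp c * (1 + fps_const b * fps_X) ^ m) ^ n
      = (1 + fps_const b * fps_X) ^ (m * n) * fps_exp (of_nat n * c)"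
    by (simp add: power_mult_distrib power_mult fps_exp_power_mult)
  then show ?thesis by (simp add: fps_mult_nth fps_one_plus_const_X_power_nth)
qed

theorem theorem10:
  fixes lam alpha b c :: complex and m :: nat and S :: "nat \<Rightarrow> complex poly"
  assumes "lam \<noteq> 1" and "b \<noteq> 0" and "c \<noteq> 0"
    and "sheffer
           (fps_cpow (fps_const (1 / (1 - lam)) * (fps_exp (lam - 1) - fps_const lam)) alpha)
           (fps_X * inverse (fps_exp c * (1 + fps_const b * fps_X) ^ m))
           S"
  shows "\<forall>n\<ge>1. \<forall>x. poly (S n) x =
           (-1) ^ (m * n) *
           (\<Sum>l=0..n-1. poisson_charlier (m * n) (of_nat l) (- (of_nat n * c) / b)
                         * (of_nat n * c) ^ l * of_nat ((n - 1) choose l)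
                         * frob_euler (n - l) alpha x lam)"
proof (intro allI impI)
  fix n :: nat and x :: complex
  assume n: "n \<ge> 1"
  define h where "h = fps_const (1 / (1 - lam)) * (fps_exp (lam - 1) - fps_const lam)"
  define phi where "phi = fps_exp c * (1 + fps_const b * fps_X) ^ m"
  have h0: "h $ 0 = 1" using assms(1) by (simp add: h_def)
  have "inverse h = fps_const (1 - lam) * inverse (fps_exp (lam - 1) - fps_const lam)"
    by (simp add: h_def fps_inverse_mult fps_const_inverse)
  then have frob: "frob_euler k alpha x lam
      = fact k * (inverse (fps_cpow h alpha) * fps_exp x) $ k" for k
    by (simp add: frob_euler_def inverse_fps_cpow[OF h0])
  have g0: "fps_cpow h alpha $ 0 \<noteq> 0" by (simp add: fps_cpow_def)
  have p0: "phi $ 0 \<noteq> 0" by (simp add: phi_def fps_one_plus_const_X_power_nth)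
  have "of_nat n * c \<noteq> 0" using n assms(3) by simp
  then have pc: "(-1) ^ (m * n) * poisson_charlier (m * n) (of_nat l) (- (of_nat n * c) / b)
      * (of_nat n * c) ^ l = fact l * (phi ^ n) $ l" for l
    unfolding phi_def fps_exp_mult_binomial_power_nth by (rule poisson_charlier_of_nat)
  show "poly (S n) x = (-1) ^ (m * n) *
           (\<Sum>l=0..n-1. poisson_charlier (m * n) (of_nat l) (- (of_nat n * c) / b)
                         * (of_nat n * c) ^ l * of_nat ((n - 1) choose l)
                         * frob_euler (n - l) alpha x lam)"
    unfolding sheffer_poly_eq_lagrange[OF assms(4)[folded h_def phi_def] g0 p0 n] sum_distrib_left
    by (intro sum.cong refl) (simp only: frob pc[symmetric] mult_ac)
qed

end
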